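(* Let $k$ be a commutative ring, $P$ an invertible $k$-module, $Q=P^*$, and $A$ a $P$-Frobenius $k$-algebra with Frobenius system $(\psi,x_i,q_i,y_i)$ such that $u=\sum_iq_i\otimes y_ix_i\in Q\otimes_kA$ is Morita-invertible. Then $A$ is strongly separable.
   Context: $A$ is $P$-Frobenius if it is finitely generated projective over $k$ and $A_A\cong\mathrm{Hom}_k(A,P)_A$, where $(\psi a)(x)=\psi(ax)$. A Frobenius system consists of $\psi\in\mathrm{Hom}_k(A,P)$ such that $a\mapsto\psi a$ is an isomorphism $A\to\mathrm{Hom}_k(A,P)$, and finitely many $x_i,y_i\in A$, $q_i\in Q$ with $\sum_ix_i\,q_i(\psi(y_ia))=a$ and $\sum_iq_i(\psi(ax_i))\,y_i=a$ for all $a\in A$. An element $\sum_iq_i\otimes a_i\in Q\otimes A$ is Morita-invertible if there is $\sum_jp_j\otimes b_j\in P\otimes A$ with $\sum_{i,j}q_i(p_j)a_ib_j=1_A$. $A$ is strongly separable (Kanzaki) if there is $e=\sum_jz_j\otimes w_j\in A\otimes A$ with $\sum_jz_jw_j=1_A$ and $\sum_jz_ja\otimes w_j=\sum_jz_j\otimes aw_j$ for all $a\in A$. *)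

theory Defs
  imports Complex_Main
begin

text \<open>Modules over a commutative ring k are types with an ab_group_add structure and a
scalar action satisfying the locale module from HOL.Modules.\<close>

definition algebra_over :: "('k::comm_ring_1 \<Rightarrow> 'a::ring_1 \<Rightarrow> 'a) \<Rightarrow> bool" where
  "algebra_over sA \<longleftrightarrow> Modules.module sA \<and>
     (\<forall>c a b. sA c (a * b) = sA c a * b \<and> sA c (a * b) = a * sA c b)"

text \<open>Tensor product M \<otimes>_k N, as the quotient of the free k-module on M \<times> N
(finitely supported functions M \<times> N \<Rightarrow> k) by the submodule spanned by the
bilinearity relations.\<close>

definition tdelta :: "'m \<Rightarrow> 'n \<Rightarrow> ('m \<times> 'n \<Rightarrow> 'k::comm_ring_1)" where
  "tdelta m n = (\<lambda>z. if z = (m, n) then 1 else 0)"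

inductive_set tensor_rel ::
  "('k::comm_ring_1 \<Rightarrow> 'm::ab_group_add \<Rightarrow> 'm) \<Rightarrow> ('k \<Rightarrow> 'n::ab_group_add \<Rightarrow> 'n)
    \<Rightarrow> ('m \<times> 'n \<Rightarrow> 'k) set"
  for sM sN where
  zero: "(\<lambda>z. 0) \<in> tensor_rel sM sN"
| add: "f \<in> tensor_rel sM sN \<Longrightarrow> g \<in> tensor_rel sM sN \<Longrightarrow> (\<lambda>z. f z + g z) \<in> tensor_rel sM sN"
| smult: "f \<in> tensor_rel sM sN \<Longrightarrow> (\<lambda>z. c * f z) \<in> tensor_rel sM sN"
| addL: "(\<lambda>z. tdelta (m + m') n z - tdelta m n z - tdelta m' n z) \<in> tensor_rel sM sN"
| addR: "(\<lambda>z. tdelta m (n + n') z - tdelta m n z - tdelta m n' z) \<in> tensor_rel sM sN"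
| scaleL: "(\<lambda>z. tdelta (sM c m) n z - c * tdelta m n z) \<in> tensor_rel sM sN"
| scaleR: "(\<lambda>z. tdelta m (sN c n) z - c * tdelta m n z) \<in> tensor_rel sM sN"

definition tsum :: "('m \<times> 'n) list \<Rightarrow> ('m \<times> 'n \<Rightarrow> 'k::comm_ring_1)" where
  "tsum xs = (\<lambda>z. (\<Sum>(m, n)\<leftarrow>xs. tdelta m n z))"

definition tensor_eq ::
  "('k::comm_ring_1 \<Rightarrow> 'm::ab_group_add \<Rightarrow> 'm) \<Rightarrow> ('k \<Rightarrow> 'n::ab_group_add \<Rightarrow> 'n)
    \<Rightarrow> ('m \<times> 'n) list \<Rightarrow> ('m \<times> 'n) list \<Rightarrow> bool" where
  "tensor_eq sM sN xs ys \<longleftrightarrow>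
     (\<lambda>z. (tsum xs z :: 'k) - tsum ys z) \<in> tensor_rel sM sN"

text \<open>P is invertible, witnessed by a k-module R and a k-bilinear map beta : P \<times> R \<rightarrow> k
whose induced linear map P \<otimes>_k R \<rightarrow> k is bijective (i.e. P \<otimes>_k R \<cong> k).\<close>
definition invertible_witness ::
  "('k::comm_ring_1 \<Rightarrow> 'p::ab_group_add \<Rightarrow> 'p) \<Rightarrow> ('k \<Rightarrow> 'r::ab_group_add \<Rightarrow> 'r)
    \<Rightarrow> ('p \<Rightarrow> 'r \<Rightarrow> 'k) \<Rightarrow> bool" where
  "invertible_witness sP sR \<beta> \<longleftrightarrow> Modules.module sP \<and> Modules.module sR \<and>
     (\<forall>r. Modules.module_hom sP (*) (\<lambda>p. \<beta> p r)) \<and> (\<forall>p. Modules.module_hom sR (*) (\<lambda>r. \<beta> p r)) \<and>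
     (\<forall>c. \<exists>xs. (\<Sum>(p, r)\<leftarrow>xs. \<beta> p r) = c) \<and>
     (\<forall>xs ys. (\<Sum>(p, r)\<leftarrow>xs. \<beta> p r) = (\<Sum>(p, r)\<leftarrow>ys. \<beta> p r) \<longrightarrow> tensor_eq sP sR xs ys)"

text \<open>Finitely generated projective k-module (dual basis: a direct summand of k^n).\<close>
definition fg_projective :: "('k::comm_ring_1 \<Rightarrow> 'm::ab_group_add \<Rightarrow> 'm) \<Rightarrow> bool" where
  "fg_projective sM \<longleftrightarrow> Modules.module sM \<and>
     (\<exists>bs :: ('m \<times> ('m \<Rightarrow> 'k)) list. (\<forall>(e, f)\<in>set bs. Modules.module_hom sM (*) f) \<and>
        (\<forall>m. m = (\<Sum>(e, f)\<leftarrow>bs. sM (f m) e)))"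

text \<open>Frobenius system (psi, x_i, q_i, y_i) for a P-Frobenius algebra A, with the
finitely many triples (x_i, q_i, y_i) given as a list.\<close>
definition frobenius_system ::
  "('k::comm_ring_1 \<Rightarrow> 'a::ring_1 \<Rightarrow> 'a) \<Rightarrow> ('k \<Rightarrow> 'p::ab_group_add \<Rightarrow> 'p)
    \<Rightarrow> ('a \<Rightarrow> 'p) \<Rightarrow> ('a \<times> ('p \<Rightarrow> 'k) \<times> 'a) list \<Rightarrow> bool" where
  "frobenius_system sA sP \<psi> xqy \<longleftrightarrow>
     Modules.module_hom sA sP \<psi> \<and>
     (\<forall>a b. (\<lambda>x. \<psi> (a * x)) = (\<lambda>x. \<psi> (b * x)) \<longrightarrow> a = b) \<and>
     (\<forall>f. Modules.module_hom sA sP f \<longrightarrow> (\<exists>a. f = (\<lambda>x. \<psi> (a * x)))) \<and>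
     (\<forall>(x, q, y)\<in>set xqy. Modules.module_hom sP (*) q) \<and>
     (\<forall>a. (\<Sum>(x, q, y)\<leftarrow>xqy. sA (q (\<psi> (y * a))) x) = a) \<and>
     (\<forall>a. (\<Sum>(x, q, y)\<leftarrow>xqy. sA (q (\<psi> (a * x))) y) = a)"

text \<open>P-Frobenius: finitely generated projective and A_A \<cong> Hom_k(A,P)_A.\<close>
definition P_Frobenius ::
  "('k::comm_ring_1 \<Rightarrow> 'a::ring_1 \<Rightarrow> 'a) \<Rightarrow> ('k \<Rightarrow> 'p::ab_group_add \<Rightarrow> 'p) \<Rightarrow> bool" where
  "P_Frobenius sA sP \<longleftrightarrow> fg_projective sA \<and>
     (\<exists>\<phi> :: 'a \<Rightarrow> 'a \<Rightarrow> 'p. bij_betw \<phi> UNIV {f. Modules.module_hom sA sP f} \<and>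
        (\<forall>a b c. \<phi> (a + b) = (\<lambda>x. \<phi> a x + \<phi> b x) \<and> \<phi> (a * c) = (\<lambda>x. \<phi> a (c * x))))"

definition morita_invertible ::
  "('k::comm_ring_1 \<Rightarrow> 'a::ring_1 \<Rightarrow> 'a) \<Rightarrow> (('p \<Rightarrow> 'k) \<times> 'a) list \<Rightarrow> bool" where
  "morita_invertible sA u \<longleftrightarrow>
     (\<exists>pb :: ('p \<times> 'a) list.
        (\<Sum>(q, a)\<leftarrow>u. \<Sum>(p, b)\<leftarrow>pb. sA (q p) (a * b)) = 1)"

definition strongly_separable :: "('k::comm_ring_1 \<Rightarrow> 'a::ring_1 \<Rightarrow> 'a) \<Rightarrow> bool" where
  "strongly_separable sA \<longleftrightarrow>
     (\<exists>e :: ('a \<times> 'a) list. (\<Sum>(z, w)\<leftarrow>e. z * w) = 1 \<and>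
        (\<forall>a. tensor_eq sA sA (map (\<lambda>(z, w). (z * a, w)) e) (map (\<lambda>(z, w). (z, a * w)) e)))"

end

theory Submission
  imports Defs "HOL-Library.Groups_Big_Fun"
begin

text \<open>Let \<open>u\<inverse> = \<Sum>\<^sub>j p\<^sub>j \<otimes> b\<^sub>j\<close> and
\<open>e = \<Sum>\<^sub>i\<^sub>,\<^sub>j y\<^sub>i \<otimes> q\<^sub>i(p\<^sub>j) x\<^sub>i b\<^sub>j\<close>. Multiplying out \<open>e\<close> gives
\<open>\<Sum>\<^sub>i\<^sub>,\<^sub>j q\<^sub>i(p\<^sub>j) y\<^sub>i x\<^sub>i b\<^sub>j = 1\<close>, which is the Morita-invertibility of \<open>u\<close>.
To see \<open>e a = a e\<close>, expand \<open>y\<^sub>i a\<close> with the second and \<open>a x\<^sub>i\<close> with the first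
identity of the Frobenius system: both sides become double sums over \<open>i, k\<close> which agree after
exchanging \<open>i\<close> and \<open>k\<close>, because \<open>q(p) q'(t) = q(t) q'(p)\<close> for linear forms \<open>q, q'\<close>
on the invertible module \<open>P\<close>. The latter holds since the flip of \<open>P \<otimes> P\<close> acts by a
scalar \<open>\<gamma>\<close>, and \<open>(1 - \<gamma>) \<beta>(z,s)\<^sup>2 = 0\<close> for all \<open>z, s\<close> forces \<open>\<gamma> = 1\<close> because the
values of \<open>\<beta>\<close> generate the unit ideal.\<close>

lemma (in additive) sum_list: "f (\<Sum>x\<leftarrow>xs. g x) = (\<Sum>x\<leftarrow>xs. f (g x))"
  by (induction xs) (simp_all add: add zero)

lemma sum_list_swap:
  "(\<Sum>i\<leftarrow>is. \<Sum>k\<leftarrow>ks. f i k) = (\<Sum>k\<leftarrow>ks. \<Sum>i\<leftarrow>is. (f i k :: 'a::comm_monoid_add))"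
  by (induction "is") (auto simp: sum_list_addf)

lemma sum_list_concat_map:
  "(\<Sum>w\<leftarrow>concat (map F xs). f w) = (\<Sum>x\<leftarrow>xs. \<Sum>w\<leftarrow>F x. (f w :: 'a::monoid_add))"
  by (induction xs) auto

lemma sum_list_cong_pair:
  "(\<And>m n. (m, n) \<in> set xs \<Longrightarrow> f m n = g m n) \<Longrightarrow> (\<Sum>(m, n)\<leftarrow>xs. f m n) = (\<Sum>(m, n)\<leftarrow>xs. g m n)"
  by (metis (mono_tags, lifting) case_prod_conv map_cong surj_pair)

subsection \<open>Equality of tensors\<close>

lemma tensor_rel_uminus: "f \<in> tensor_rel sM sN \<Longrightarrow> (\<lambda>z. - f z) \<in> tensor_rel sM sN"
  using tensor_rel.smult[of f sM sN "- 1"] by simp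

lemma tensor_rel_diff:
  "f \<in> tensor_rel sM sN \<Longrightarrow> g \<in> tensor_rel sM sN \<Longrightarrow> (\<lambda>z. f z - g z) \<in> tensor_rel sM sN"
  using tensor_rel.add[OF _ tensor_rel_uminus] by simp

lemma tsum_Nil [simp]: "tsum [] = (\<lambda>z. 0)"
  by (simp add: tsum_def)

lemma tsum_Cons [simp]: "tsum ((m, n) # xs) z = tdelta m n z + tsum xs z"
  by (simp add: tsum_def)

lemma tsum_append [simp]: "tsum (xs @ ys) z = tsum xs z + tsum ys z"
  by (simp add: tsum_def)

lemma tensor_eqI:
  assumes "\<And>z. (tsum xs z :: 'k::comm_ring_1) = tsum ys z"
  shows "tensor_eq (sM :: 'k \<Rightarrow> 'm::ab_group_add \<Rightarrow> 'm) sN xs ys"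
  using tensor_rel.zero assms unfolding tensor_eq_def by simp

lemma tensor_eq_refl: "tensor_eq sM sN xs xs"
  by (rule tensor_eqI) simp

lemma tensor_eq_sym: "tensor_eq sM sN xs ys \<Longrightarrow> tensor_eq sM sN ys xs"
  unfolding tensor_eq_def by (drule tensor_rel_uminus) simp

lemma tensor_eq_trans [trans]:
  "tensor_eq sM sN xs ys \<Longrightarrow> tensor_eq sM sN ys zs \<Longrightarrow> tensor_eq sM sN xs zs"
  unfolding tensor_eq_def by (drule (1) tensor_rel.add) simp

lemma tensor_eq_append:
  "tensor_eq sM sN xs ys \<Longrightarrow> tensor_eq sM sN us vs \<Longrightarrow> tensor_eq sM sN (xs @ us) (ys @ vs)"
  unfolding tensor_eq_def by (drule (1) tensor_rel.add) (simp add: algebra_simps)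

lemma tensor_eq_concat_map:
  "(\<And>x. x \<in> set xs \<Longrightarrow> tensor_eq sM sN (f x) (g x)) \<Longrightarrow>
    tensor_eq sM sN (concat (map f xs)) (concat (map g xs))"
  by (induction xs) (auto intro: tensor_eq_refl tensor_eq_append)

lemma tensor_eq_map:
  "(\<And>x. x \<in> set xs \<Longrightarrow> tensor_eq sM sN [f x] [g x]) \<Longrightarrow> tensor_eq sM sN (map f xs) (map g xs)"
  using tensor_eq_concat_map[of xs sM sN "\<lambda>x. [f x]" "\<lambda>x. [g x]"] by (simp add: map_concat)

lemma tensor_eq_map_concat_map:
  "(\<And>x. x \<in> set xs \<Longrightarrow> tensor_eq sM sN [f x] (g x)) \<Longrightarrow>
    tensor_eq sM sN (map f xs) (concat (map g xs))"
  using tensor_eq_concat_map[of xs sM sN "\<lambda>x. [f x]" g] by (simp add: map_concat)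

lemma tensor_eq_concat_map_transpose:
  assumes "\<And>i k. i \<in> set is \<Longrightarrow> k \<in> set ks \<Longrightarrow> F i k = G k i"
  shows "tensor_eq sM sN (concat (map (\<lambda>i. map (F i) ks) is)) (concat (map (\<lambda>k. map (G k) is) ks))"
    (is "tensor_eq _ _ ?lhs ?rhs")
proof (rule tensor_eqI)
  fix z
  have "tsum ?lhs z = (\<Sum>i\<leftarrow>is. \<Sum>k\<leftarrow>ks. tdelta (fst (F i k)) (snd (F i k)) z)"
    by (simp add: tsum_def sum_list_concat_map case_prod_unfold o_def)
  also have "\<dots> = (\<Sum>k\<leftarrow>ks. \<Sum>i\<leftarrow>is. tdelta (fst (G k i)) (snd (G k i)) z)"
    by (subst sum_list_swap) (simp add: assms cong: map_cong)
  also have "\<dots> = tsum ?rhs z"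
    by (simp add: tsum_def sum_list_concat_map case_prod_unfold o_def)
  finally show "tsum ?lhs z = tsum ?rhs z" .
qed

lemma tensor_eq_add_left: "tensor_eq sM sN [(m + m', n)] [(m, n), (m', n)]"
  unfolding tensor_eq_def using tensor_rel.addL[of m m' n sM sN] by (simp add: algebra_simps)

lemma tensor_eq_add_right: "tensor_eq sM sN [(m, n + n')] [(m, n), (m, n')]"
  unfolding tensor_eq_def using tensor_rel.addR[of m n n' sM sN] by (simp add: algebra_simps)

lemma tensor_eq_zero_left: "tensor_eq sM sN [(0, n)] []"
  unfolding tensor_eq_def using tensor_rel_uminus[OF tensor_rel.addL[of 0 0 n sM sN]]
  by (simp add: algebra_simps)

lemma tensor_eq_zero_right: "tensor_eq sM sN [(m, 0)] []"
  unfolding tensor_eq_def using tensor_rel_uminus[OF tensor_rel.addR[of m 0 0 sM sN]]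
  by (simp add: algebra_simps)

lemma tensor_eq_scale: "tensor_eq sM sN [(sM c m, n)] [(m, sN c n)]"
  unfolding tensor_eq_def
  using tensor_rel_diff[OF tensor_rel.scaleL[of sM c m n sN] tensor_rel.scaleR[of m sN c n sM]]
  by simp

lemma tensor_eq_sum_list_left:
  "tensor_eq sM sN [(\<Sum>k\<leftarrow>ks. f k, n)] (map (\<lambda>k. (f k, n)) ks)"
proof (induction ks)
  case Nil
  show ?case by (simp add: tensor_eq_zero_left)
next
  case (Cons k ks)
  have "tensor_eq sM sN [(f k + (\<Sum>k\<leftarrow>ks. f k), n)] ([(f k, n)] @ [(\<Sum>k\<leftarrow>ks. f k, n)])"
    using tensor_eq_add_left by simp
  also have "tensor_eq sM sN \<dots> ([(f k, n)] @ map (\<lambda>k. (f k, n)) ks)"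
    by (rule tensor_eq_append[OF tensor_eq_refl Cons.IH])
  finally show ?case by simp
qed

lemma tensor_eq_sum_list_right:
  "tensor_eq sM sN [(m, \<Sum>k\<leftarrow>ks. f k)] (map (\<lambda>k. (m, f k)) ks)"
proof (induction ks)
  case Nil
  show ?case by (simp add: tensor_eq_zero_right)
next
  case (Cons k ks)
  have "tensor_eq sM sN [(m, f k + (\<Sum>k\<leftarrow>ks. f k))] ([(m, f k)] @ [(m, \<Sum>k\<leftarrow>ks. f k)])"
    using tensor_eq_add_right by simp
  also have "tensor_eq sM sN \<dots> ([(m, f k)] @ map (\<lambda>k. (m, f k)) ks)"
    by (rule tensor_eq_append[OF tensor_eq_refl Cons.IH])
  finally show ?case by simp
qed

subsection \<open>Bilinear forms factor through the tensor product\<close>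

lemma finite_support_tdelta [simp]: "finite {z. tdelta m n z \<noteq> 0}"
  by (rule finite_subset[of _ "{(m, n)}"]) (auto simp: tdelta_def)

lemma finite_support_add [simp]:
  "finite {z. f z \<noteq> 0} \<Longrightarrow> finite {z. h z \<noteq> 0} \<Longrightarrow> finite {z. f z + h z \<noteq> (0::'a::monoid_add)}"
  by (rule finite_subset[of _ "{z. f z \<noteq> 0} \<union> {z. h z \<noteq> 0}"]) auto

lemma finite_support_diff [simp]:
  "finite {z. f z \<noteq> 0} \<Longrightarrow> finite {z. h z \<noteq> 0} \<Longrightarrow> finite {z. f z - h z \<noteq> (0::'a::group_add)}"
  by (rule finite_subset[of _ "{z. f z \<noteq> 0} \<union> {z. h z \<noteq> 0}"]) auto

lemma finite_support_mult [simp]: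
  "finite {z. f z \<noteq> 0} \<Longrightarrow> finite {z. c * f z \<noteq> (0::'a::mult_zero)}"
  by (rule finite_subset[of _ "{z. f z \<noteq> 0}"]) auto

lemma finite_support_tsum [simp]: "finite {z. tsum xs z \<noteq> 0}"
  by (induction xs) auto

lemma Sum_any_add_mult:
  fixes f h :: "'z \<Rightarrow> 'a::semiring_0"
  assumes "finite {z. f z \<noteq> 0}" "finite {z. h z \<noteq> 0}"
  shows "Sum_any (\<lambda>z. (f z + h z) * g z) = Sum_any (\<lambda>z. f z * g z) + Sum_any (\<lambda>z. h z * g z)"
proof -
  have "finite {z. f z * g z \<noteq> 0}" "finite {z. h z * g z \<noteq> 0}"
    by (rule finite_subset[OF _ assms(1)], auto) (rule finite_subset[OF _ assms(2)], auto)
  then show ?thesis by (simp add: distrib_right Sum_any.distrib)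
qed

lemma Sum_any_mult_mult:
  fixes f :: "'z \<Rightarrow> 'a::semiring_0"
  assumes "finite {z. f z \<noteq> 0}"
  shows "Sum_any (\<lambda>z. (c * f z) * g z) = c * Sum_any (\<lambda>z. f z * g z)"
  by (subst Sum_any_right_distrib) (rule finite_subset[OF _ assms], auto simp: mult.assoc)

lemma Sum_any_diff_mult:
  fixes f h :: "'z \<Rightarrow> 'a::ring_1"
  assumes "finite {z. f z \<noteq> 0}" "finite {z. h z \<noteq> 0}"
  shows "Sum_any (\<lambda>z. (f z - h z) * g z) = Sum_any (\<lambda>z. f z * g z) - Sum_any (\<lambda>z. h z * g z)"
  using Sum_any_add_mult[of f "\<lambda>z. - 1 * h z" g] Sum_any_mult_mult[of h "- 1" g] assms
  by simp

lemma Sum_any_tdelta_mult [simp]: "Sum_any (\<lambda>z. tdelta m n z * g z) = g (m, n)"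
proof -
  have "(\<lambda>z. tdelta m n z * g z) = (\<lambda>z. if z = (m, n) then g z else 0)"
    by (auto simp: tdelta_def)
  then show ?thesis by (simp only:) simp
qed

lemma Sum_any_tsum_mult: "Sum_any (\<lambda>z. tsum xs z * g z) = (\<Sum>(m, n)\<leftarrow>xs. g (m, n))"
  by (induction xs) (auto simp: Sum_any_add_mult)

locale bilinear_form =
  fixes sM :: "'k::comm_ring_1 \<Rightarrow> 'm::ab_group_add \<Rightarrow> 'm" and sN :: "'k \<Rightarrow> 'n::ab_group_add \<Rightarrow> 'n"
    and G :: "'m \<Rightarrow> 'n \<Rightarrow> 'k"
  assumes add_left: "G (m + m') n = G m n + G m' n"
    and add_right: "G m (n + n') = G m n + G m n'"
    and scale_left: "G (sM c m) n = c * G m n"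
    and scale_right: "G m (sN c n) = c * G m n"
begin

text \<open>\<open>Sum_any\<close> is zero on functions of infinite support, so finiteness of the support
has to be carried through the induction.\<close>

lemma tensor_rel_annihilated:
  assumes "f \<in> tensor_rel sM sN"
  shows "finite {z. f z \<noteq> 0} \<and> Sum_any (\<lambda>z. f z * case_prod G z) = 0"
  using assms
  by induction
    (simp_all del: right_minus_eq add: Sum_any_add_mult Sum_any_diff_mult Sum_any_mult_mult
      add_left add_right scale_left scale_right)

lemma sum_list_eq_if_tensor_eq:
  assumes "tensor_eq sM sN xs ys"
  shows "(\<Sum>(m, n)\<leftarrow>xs. G m n) = (\<Sum>(m, n)\<leftarrow>ys. G m n)"
proof -
  have "Sum_any (\<lambda>z. (tsum xs z - tsum ys z) * case_prod G z) = 0"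
    using tensor_rel_annihilated assms unfolding tensor_eq_def by blast
  then show ?thesis
    by (simp add: Sum_any_diff_mult Sum_any_tsum_mult)
qed

end

lemma bilinear_form_product:
  assumes q: "module_hom sM (*) q" and h: "module_hom sN (*) h"
  shows "bilinear_form sM sN (\<lambda>m n. q m * h n)"
proof
  show "q (m + m') * h n = q m * h n + q m' * h n" for m m' n
    by (simp add: module_hom.add[OF q] distrib_right)
  show "q m * h (n + n') = q m * h n + q m * h n'" for m n n'
    by (simp add: module_hom.add[OF h] distrib_left)
  show "q (sM c m) * h n = c * (q m * h n)" for c m n
    by (simp add: module_hom.scale[OF q] mult.assoc)
  show "q m * h (sN c n) = c * (q m * h n)" for c m n
    by (simp add: module_hom.scale[OF h] mult.left_commute)
qed

subsection \<open>Invertible modules\<close>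

lemma mult_power_Suc_add_of_square_annihilated:
  fixes x b S :: "'k::comm_ring_1"
  assumes "x * b ^ 2 = 0"
  shows "x * (b + S) ^ Suc n = x * S ^ Suc n + of_nat (Suc n) * x * b * S ^ n"
proof (induction n)
  case 0
  show ?case by (simp add: algebra_simps)
next
  case (Suc n)
  have "x * (b + S) ^ Suc (Suc n) = (b + S) * (x * (b + S) ^ Suc n)"
    by (simp only: power_Suc ac_simps)
  also have "\<dots> = (b + S) * (x * S ^ Suc n + of_nat (Suc n) * x * b * S ^ n)"
    by (simp only: Suc)
  also have "\<dots> = x * S ^ Suc (Suc n) + of_nat (Suc (Suc n)) * x * b * S ^ Suc n
      + of_nat (Suc n) * (x * b ^ 2) * S ^ n"
    by (simp only: power_Suc power2_eq_square of_nat_Suc) (simp add: algebra_simps)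
  finally show ?case using assms by simp
qed

lemma annihilates_sum_list_power:
  fixes x :: "'k::comm_ring_1"
  assumes "\<And>b. b \<in> set bs \<Longrightarrow> x * b ^ 2 = 0"
  shows "x * sum_list bs ^ Suc (length bs) = 0"
  using assms
proof (induction bs)
  case (Cons b bs)
  then have IH: "x * sum_list bs ^ Suc (length bs) = 0" by simp
  have "x * b ^ 2 = 0" using Cons.prems by simp
  then have "x * (b + sum_list bs) ^ Suc (Suc (length bs))
      = x * sum_list bs ^ Suc (length bs) * (sum_list bs + of_nat (Suc (Suc (length bs))) * b)"
    by (simp only: mult_power_Suc_add_of_square_annihilated) (simp add: algebra_simps)
  then show ?case by (simp del: power_Suc add: IH)
qed simp

locale invertible_pairing =
  fixes sP :: "'k::comm_ring_1 \<Rightarrow> 'p::ab_group_add \<Rightarrow> 'p" and sR :: "'k \<Rightarrow> 'r::ab_group_add \<Rightarrow> 'r"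
    and \<beta> :: "'p \<Rightarrow> 'r \<Rightarrow> 'k" and E :: "('p \<times> 'r) list"
  assumes invertible: "invertible_witness sP sR \<beta>"
    and unit: "(\<Sum>(p, r)\<leftarrow>E. \<beta> p r) = 1"
begin

lemma linear_left: "module_hom sP (*) (\<lambda>p. \<beta> p r)"
  using invertible unfolding invertible_witness_def by blast

lemma linear_right: "module_hom sR (*) (\<lambda>r. \<beta> p r)"
  using invertible unfolding invertible_witness_def by blast

lemma pure_tensor_eq_scaled_unit:
  "tensor_eq sP sR [(x, s)] (map (\<lambda>(p, r). (sP (\<beta> x s) p, r)) E)"
proof -
  have "(\<Sum>(p, r)\<leftarrow>map (\<lambda>(p, r). (sP (\<beta> x s) p, r)) E. \<beta> p r) = (\<Sum>(p, r)\<leftarrow>E. \<beta> x s * \<beta> p r)"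
    by (simp add: o_def case_prod_unfold module_hom.scale[OF linear_left])
  also have "\<dots> = \<beta> x s"
    using unit by (simp add: sum_list_const_mult case_prod_unfold)
  finally show ?thesis
    using invertible unfolding invertible_witness_def by simp
qed

lemma product_of_functionals:
  assumes q: "module_hom sP (*) q" and h: "module_hom sR (*) h"
  shows "q x * h s = \<beta> x s * (\<Sum>(p, r)\<leftarrow>E. q p * h r)"
proof -
  have "q x * h s = (\<Sum>(p, r)\<leftarrow>map (\<lambda>(p, r). (sP (\<beta> x s) p, r)) E. q p * h r)"
    using bilinear_form.sum_list_eq_if_tensor_eq[OF bilinear_form_product[OF q h]
        pure_tensor_eq_scaled_unit[of x s]]
    by simp
  also have "\<dots> = (\<Sum>(p, r)\<leftarrow>E. \<beta> x s * (q p * h r))"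
    by (simp add: o_def case_prod_unfold module_hom.scale[OF q] mult.assoc)
  also have "\<dots> = \<beta> x s * (\<Sum>(p, r)\<leftarrow>E. q p * h r)"
    by (simp add: sum_list_const_mult case_prod_unfold)
  finally show ?thesis .
qed

lemma product_of_pairings:
  "\<beta> y s' * \<beta> z s = \<beta> y s * (\<Sum>(p, r)\<leftarrow>E. \<beta> p s' * \<beta> z r)"
  by (rule product_of_functionals[OF linear_left linear_right])

text \<open>The scalar by which the flip of \<open>P \<otimes> P\<close> acts, computed on the unit
\<open>\<Sum>(p, r)\<leftarrow>E. p \<otimes> r\<close> of \<open>P \<otimes> R \<cong> k\<close>.\<close>

definition flip_scalar :: 'k where
  "flip_scalar = (\<Sum>(p', r')\<leftarrow>E. \<Sum>(p, r)\<leftarrow>E. \<beta> p r' * \<beta> p' r)"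

lemma sum_pairing_products: "(\<Sum>(p, r)\<leftarrow>E. \<beta> y r * \<beta> p s) = flip_scalar * \<beta> y s"
proof -
  have "(\<Sum>(p, r)\<leftarrow>E. \<beta> y r * \<beta> p s)
      = (\<Sum>(p', r')\<leftarrow>E. \<beta> y s * (\<Sum>(p, r)\<leftarrow>E. \<beta> p r' * \<beta> p' r))"
    by (rule sum_list_cong_pair) (rule product_of_pairings)
  then show ?thesis
    by (simp add: flip_scalar_def sum_list_const_mult case_prod_unfold mult.commute)
qed

lemma flip_scalar_annihilates_square: "(1 - flip_scalar) * \<beta> z s ^ 2 = 0"
proof -
  have "\<beta> z s * \<beta> z s = \<beta> z s * (\<Sum>(p, r)\<leftarrow>E. \<beta> p s * \<beta> z r)"
    by (rule product_of_pairings)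
  also have "(\<Sum>(p, r)\<leftarrow>E. \<beta> p s * \<beta> z r) = flip_scalar * \<beta> z s"
    using sum_pairing_products[of z s] by (simp add: mult.commute)
  finally show ?thesis by (simp add: algebra_simps power2_eq_square)
qed

lemma flip_scalar_eq_1: "flip_scalar = 1"
proof -
  let ?bs = "map (\<lambda>(p, r). \<beta> p r) E"
  have "(1 - flip_scalar) * sum_list ?bs ^ Suc (length ?bs) = 0"
    by (rule annihilates_sum_list_power) (auto simp: flip_scalar_annihilates_square)
  then show ?thesis using unit by simp
qed

lemma sum_pairing_products_eq: "(\<Sum>(p, r)\<leftarrow>E. \<beta> y r * \<beta> p s) = \<beta> y s"
  by (simp add: sum_pairing_products flip_scalar_eq_1)

lemma dual_basis_expansion:
  assumes q: "module_hom sP (*) q"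
  shows "(\<Sum>(p, r)\<leftarrow>E. \<beta> y r * q p) = q y"
proof -
  have "q y = (\<Sum>(p', r')\<leftarrow>E. q y * \<beta> p' r')"
    using unit by (simp add: sum_list_const_mult case_prod_unfold)
  also have "\<dots> = (\<Sum>(p', r')\<leftarrow>E. \<beta> y r' * (\<Sum>(p, r)\<leftarrow>E. q p * \<beta> p' r))"
    by (rule sum_list_cong_pair) (rule product_of_functionals[OF q linear_right])
  also have "\<dots> = (\<Sum>(p', r')\<leftarrow>E. \<Sum>(p, r)\<leftarrow>E. q p * (\<beta> y r' * \<beta> p' r))"
    by (simp add: sum_list_const_mult case_prod_unfold ac_simps)
  also have "\<dots> = (\<Sum>(p, r)\<leftarrow>E. \<Sum>(p', r')\<leftarrow>E. q p * (\<beta> y r' * \<beta> p' r))"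
    unfolding case_prod_unfold by (rule sum_list_swap)
  also have "\<dots> = (\<Sum>(p, r)\<leftarrow>E. q p * \<beta> y r)"
    using sum_pairing_products_eq by (simp add: sum_list_const_mult case_prod_unfold)
  finally show ?thesis by (simp add: mult.commute)
qed

lemma functional_pairing_swap:
  assumes q: "module_hom sP (*) q"
  shows "q y * \<beta> x s = \<beta> y s * q x"
  using product_of_functionals[OF q linear_right, of y x s] dual_basis_expansion[OF q, of x]
  by (simp add: mult.commute)

lemma functional_products_swap:
  assumes q: "module_hom sP (*) q" and q': "module_hom sP (*) q'"
  shows "q p * q' t = q t * q' p"
proof -
  have "q p * q' t = (\<Sum>(p', r)\<leftarrow>E. q' p' * (q p * \<beta> t r))"
    using dual_basis_expansion[OF q', of t] by (simp add: sum_list_const_mult case_prod_unfold ac_simps)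
  also have "\<dots> = (\<Sum>(p', r)\<leftarrow>E. q' p' * (\<beta> p r * q t))"
    by (simp only: functional_pairing_swap[OF q])
  also have "\<dots> = q t * q' p"
    using dual_basis_expansion[OF q', of p] by (simp add: sum_list_const_mult case_prod_unfold ac_simps)
  finally show ?thesis .
qed

end

lemma invertible_witness_functional_products_swap:
  assumes "invertible_witness sP sR \<beta>" "module_hom sP (*) q" "module_hom sP (*) q'"
  shows "q p * q' t = q t * q' p"
proof -
  obtain E where "(\<Sum>(p, r)\<leftarrow>E. \<beta> p r) = 1"
    using assms(1) unfolding invertible_witness_def by blast
  with assms(1) interpret invertible_pairing sP sR \<beta> E
    by unfold_locales
  show ?thesis by (rule functional_products_swap[OF assms(2,3)])
qed

subsection \<open>Frobenius systems over an invertible module\<close>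

locale invertible_frobenius =
  fixes sA :: "'k::comm_ring_1 \<Rightarrow> 'a::ring_1 \<Rightarrow> 'a"
    and sP :: "'k \<Rightarrow> 'p::ab_group_add \<Rightarrow> 'p"
    and sR :: "'k \<Rightarrow> 'r::ab_group_add \<Rightarrow> 'r"
    and \<beta> :: "'p \<Rightarrow> 'r \<Rightarrow> 'k"
    and \<psi> :: "'a \<Rightarrow> 'p"
    and X :: "('a \<times> ('p \<Rightarrow> 'k) \<times> 'a) list"
  assumes algebra: "algebra_over sA"
    and invertible: "invertible_witness sP sR \<beta>"
    and frobenius: "frobenius_system sA sP \<psi> X"
begin

lemma scale_scale [simp]: "sA c (sA d v) = sA (c * d) v"
  using algebra unfolding algebra_over_def by (simp add: module.scale_scale)

lemma scale_mult_left: "sA c (a * b) = sA c a * b"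
  and scale_mult_right: "sA c (a * b) = a * sA c b"
  using algebra unfolding algebra_over_def by blast+

lemma scale_sum_list: "sA c (\<Sum>x\<leftarrow>xs. f x) = (\<Sum>x\<leftarrow>xs. sA c (f x))"
proof -
  interpret additive "sA c"
    using algebra unfolding algebra_over_def
    by unfold_locales (simp add: module.scale_right_distrib)
  show ?thesis by (rule sum_list)
qed

lemma expansion_left: "(\<Sum>(x, q, y)\<leftarrow>X. sA (q (\<psi> (y * a))) x) = a"
  and expansion_right: "(\<Sum>(x, q, y)\<leftarrow>X. sA (q (\<psi> (a * x))) y) = a"
  using frobenius unfolding frobenius_system_def by blast+

lemma coefficients_swap:
  assumes "(x, q, y) \<in> set X" "(x', q', y') \<in> set X"
  shows "q w * q' p = q p * q' w"
  using frobenius assms unfolding frobenius_system_def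
  by (intro invertible_witness_functional_products_swap[OF invertible]) fastforce+

lemma tensor_expand_left:
  "tensor_eq sA sA [(a, w)] (map (\<lambda>(x, q, y). (y, sA (q (\<psi> (a * x))) w)) X)"
proof -
  have "tensor_eq sA sA [(a, w)] (map (\<lambda>(x, q, y). (sA (q (\<psi> (a * x))) y, w)) X)"
    using tensor_eq_sum_list_left[where sM=sA and sN=sA and ks=X and n=w
        and f="\<lambda>(x, q, y). sA (q (\<psi> (a * x))) y"] expansion_right[of a]
    by (simp add: case_prod_unfold)
  also have "tensor_eq sA sA \<dots> (map (\<lambda>(x, q, y). (y, sA (q (\<psi> (a * x))) w)) X)"
    by (rule tensor_eq_map) (auto intro: tensor_eq_scale)
  finally show ?thesis .
qed

lemma tensor_expand_right:
  "tensor_eq sA sA [(v, sA c (d * b))] (map (\<lambda>(x, q, y). (v, sA (c * q (\<psi> (y * d))) (x * b))) X)"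
proof -
  have "sA c (d * b) = sA c ((\<Sum>(x, q, y)\<leftarrow>X. sA (q (\<psi> (y * d))) x) * b)"
    by (simp only: expansion_left)
  also have "\<dots> = (\<Sum>(x, q, y)\<leftarrow>X. sA (c * q (\<psi> (y * d))) (x * b))"
    by (simp add: sum_list_mult_const[symmetric] scale_mult_left[symmetric] scale_sum_list case_prod_unfold)
  finally show ?thesis
    using tensor_eq_sum_list_right[where sM=sA and sN=sA and ks=X and m=v
        and f="\<lambda>(x, q, y). sA (c * q (\<psi> (y * d))) (x * b)"]
    by (simp add: case_prod_unfold)
qed

definition separability_idempotent :: "('p \<times> 'a) list \<Rightarrow> ('a \<times> 'a) list" where
  "separability_idempotent pb =
    concat (map (\<lambda>(p, b). map (\<lambda>(x, q, y). (y, sA (q p) (x * b))) X) pb)"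

lemma separability_idempotent_mult:
  "(\<Sum>(z, w)\<leftarrow>separability_idempotent pb. z * w) =
    (\<Sum>(q, a)\<leftarrow>map (\<lambda>(x, q, y). (q, y * x)) X. \<Sum>(p, b)\<leftarrow>pb. sA (q p) (a * b))"
proof -
  have "(\<Sum>(z, w)\<leftarrow>separability_idempotent pb. z * w) =
      (\<Sum>(p, b)\<leftarrow>pb. \<Sum>(x, q, y)\<leftarrow>X. sA (q p) (y * x * b))"
    unfolding separability_idempotent_def
    by (simp add: sum_list_concat_map case_prod_unfold o_def scale_mult_right[symmetric] mult.assoc)
  then show ?thesis
    by (simp add: sum_list_swap[of _ pb] case_prod_unfold o_def)
qed

lemma separability_idempotent_summand_commutes:
  "tensor_eq sA sA (map (\<lambda>(x, q, y). (y * a, sA (q p) (x * b))) X)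
    (map (\<lambda>(x, q, y). (y, a * sA (q p) (x * b))) X)"
proof -
  define F :: "'a \<times> ('p \<Rightarrow> 'k) \<times> 'a \<Rightarrow> 'a \<times> ('p \<Rightarrow> 'k) \<times> 'a \<Rightarrow> 'a \<times> 'a"
    where "F = (\<lambda>(x, q, y) (x', q', y'). (y', sA (q' (\<psi> (y * a * x')) * q p) (x * b)))"
  define G :: "'a \<times> ('p \<Rightarrow> 'k) \<times> 'a \<Rightarrow> 'a \<times> ('p \<Rightarrow> 'k) \<times> 'a \<Rightarrow> 'a \<times> 'a"
    where "G = (\<lambda>(x, q, y) (x', q', y'). (y, sA (q p * q' (\<psi> (y' * (a * x)))) (x' * b)))"
  have "tensor_eq sA sA (map (\<lambda>(x, q, y). (y * a, sA (q p) (x * b))) X) (concat (map (\<lambda>i. map (F i) X) X))"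
  proof (rule tensor_eq_map_concat_map, clarify)
    fix x q y
    show "tensor_eq sA sA [(y * a, sA (q p) (x * b))] (map (F (x, q, y)) X)"
      using tensor_expand_left[of "y * a" "sA (q p) (x * b)"] by (simp add: F_def)
  qed
  also have "tensor_eq sA sA \<dots> (concat (map (\<lambda>k. map (G k) X) X))"
  proof (rule tensor_eq_concat_map_transpose, clarify)
    fix x q y x' q' y'
    assume "(x, q, y) \<in> set X" "(x', q', y') \<in> set X"
    then show "F (x, q, y) (x', q', y') = G (x', q', y') (x, q, y)"
      unfolding F_def G_def by (simp add: coefficients_swap mult.assoc)
  qed
  also have "tensor_eq sA sA \<dots> (map (\<lambda>(x, q, y). (y, a * sA (q p) (x * b))) X)"
  proof (rule tensor_eq_sym, rule tensor_eq_map_concat_map, clarify)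
    fix x q y
    show "tensor_eq sA sA [(y, a * sA (q p) (x * b))] (map (G (x, q, y)) X)"
      using tensor_expand_right[of y "q p" "a * x" b]
      by (simp add: G_def scale_mult_right[symmetric] mult.assoc)
  qed
  finally show ?thesis .
qed

lemma separability_idempotent_commutes:
  "tensor_eq sA sA (map (\<lambda>(z, w). (z * a, w)) (separability_idempotent pb))
    (map (\<lambda>(z, w). (z, a * w)) (separability_idempotent pb))"
  unfolding separability_idempotent_def map_concat
  by (rule tensor_eq_concat_map)
    (auto simp: o_def case_prod_unfold
      intro: separability_idempotent_summand_commutes[unfolded case_prod_unfold])

end

theorem proposition6p5:
  fixes sA :: "'k::comm_ring_1 \<Rightarrow> 'a::ring_1 \<Rightarrow> 'a"
    and sP :: "'k \<Rightarrow> 'p::ab_group_add \<Rightarrow> 'p"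
    and sR :: "'k \<Rightarrow> 'r::ab_group_add \<Rightarrow> 'r"
    and \<beta> :: "'p \<Rightarrow> 'r \<Rightarrow> 'k"
    and \<psi> :: "'a \<Rightarrow> 'p"
    and xqy :: "('a \<times> ('p \<Rightarrow> 'k) \<times> 'a) list"
  assumes "algebra_over sA"
    and "invertible_witness sP sR \<beta>"
    and "P_Frobenius sA sP"
    and "frobenius_system sA sP \<psi> xqy"
    and "morita_invertible sA (map (\<lambda>(x, q, y). (q, y * x)) xqy)"
  shows "strongly_separable sA"
proof -
  interpret invertible_frobenius sA sP sR \<beta> \<psi> xqy
    using assms(1,2,4) by unfold_locales
  obtain pb where "(\<Sum>(q, a)\<leftarrow>map (\<lambda>(x, q, y). (q, y * x)) xqy. \<Sum>(p, b)\<leftarrow>pb. sA (q p) (a * b)) = 1"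
    using assms(5) unfolding morita_invertible_def by blast
  then show ?thesis
    unfolding strongly_separable_def
    by (intro exI[of _ "separability_idempotent pb"])
      (simp add: separability_idempotent_mult separability_idempotent_commutes)
qed

end
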